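(* Suppose the payoff is normally distributed, $\tilde v\sim N(\mu_v,\sigma_v^2)$ with $\sigma_v>0$, and let $\lambda,\sigma_Z,T>0$. Consider the problem of maximizing $$J=\frac12\Big\{\mathbb E\big[\mathbb E[\tilde v|\tilde s]^2\big]+\sigma_Z^2T-W_2^2(F_s,G)\Big\}-\lambda I(\tilde s;\tilde v)$$ over signal structures $(p(\cdot|\cdot),q(\cdot))$, i.e. a marginal density $q$ of the signal $\tilde s$ and conditional densities $p(v|s)$ with $\int p(v|s)\,dv=1$ for all $s$ and $\int p(v|s)q(s)\,ds=p(v)$ for all $v$, where $p$ is the $N(\mu_v,\sigma_v^2)$ density. Then, among all such distributions for which $\frac{d}{ds}\mathbb E[\tilde v|\tilde s=s]\neq0$ for almost all $s$, an optimal $(p(\cdot|\cdot),q(\cdot))$ is normal (i.e. $(\tilde v,\tilde s)$ is jointly normal). Moreover, this optimal signal structure can be implemented by a signal $\tilde s=\tilde v+\tilde\epsilon$ with $\tilde\epsilon\sim N(0,\sigma_\epsilon^2)$ independent of $\tilde v$.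
   Context: $F_s$ is the distribution function of $\mathbb E[\tilde v|\tilde s]$, $G$ is the CDF of $N(0,\sigma_Z^2T)$ (the law of terminal noise trades $Z_T=\sigma_ZB_T$), and $W_2$ is the Wasserstein-2 distance. $I(\tilde s;\tilde v)=\mathbb H(p)-\int q(s)\mathbb H(p(\cdot|s))\,ds$ is the mutual information, with $\mathbb H$ the (differential) entropy. $J$ is the informed trader's unconditional expected profit in the Kyle–Back equilibrium minus the information acquisition cost. *)

theory Defs
  imports "HOL-Probability.Probability"
begin

text \<open>A signal structure: pc v s = p(v|s) (conditional density of the payoff given the
signal), q = marginal density of the signal; the payoff density is N(mu, sigma^2).\<close>

definition signal_structure ::
  "real \<Rightarrow> real \<Rightarrow> (real \<Rightarrow> real \<Rightarrow> real) \<Rightarrow> (real \<Rightarrow> real) \<Rightarrow> bool" where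
  "signal_structure \<mu> \<sigma> pc q \<longleftrightarrow>
     q \<in> borel_measurable lborel \<and> (\<forall>s. 0 \<le> q s) \<and>
     integrable lborel q \<and> (\<integral>s. q s \<partial>lborel) = 1 \<and>
     (\<lambda>(v, s). pc v s) \<in> borel_measurable (lborel \<Otimes>\<^sub>M lborel) \<and>
     (\<forall>v s. 0 \<le> pc v s) \<and>
     (\<forall>s. integrable lborel (\<lambda>v. pc v s) \<and> (\<integral>v. pc v s \<partial>lborel) = 1) \<and>
     (\<forall>v. integrable lborel (\<lambda>s. pc v s * q s) \<and>
          (\<integral>s. pc v s * q s \<partial>lborel) = normal_density \<mu> \<sigma> v)"

definition cond_mean :: "(real \<Rightarrow> real \<Rightarrow> real) \<Rightarrow> real \<Rightarrow> real" where
  "cond_mean pc s = (\<integral>v. v * pc v s \<partial>lborel)"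

definition diff_entropy :: "(real \<Rightarrow> real) \<Rightarrow> real" where
  "diff_entropy f = - (\<integral>x. f x * ln (f x) \<partial>lborel)"

definition mutual_info ::
  "real \<Rightarrow> real \<Rightarrow> (real \<Rightarrow> real \<Rightarrow> real) \<Rightarrow> (real \<Rightarrow> real) \<Rightarrow> real" where
  "mutual_info \<mu> \<sigma> pc q =
     diff_entropy (normal_density \<mu> \<sigma>) - (\<integral>s. q s * diff_entropy (\<lambda>v. pc v s) \<partial>lborel)"

definition W2sq :: "real measure \<Rightarrow> real measure \<Rightarrow> ennreal" where
  "W2sq M N = (INF \<pi> \<in> {\<pi>. prob_space \<pi> \<and> sets \<pi> = sets (lborel \<Otimes>\<^sub>M lborel) \<and>
                         distr \<pi> lborel fst = M \<and> distr \<pi> lborel snd = N}.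
                 \<integral>\<^sup>+ xy. ennreal ((fst xy - snd xy)\<^sup>2) \<partial>\<pi>)"

definition law_cond_mean :: "(real \<Rightarrow> real \<Rightarrow> real) \<Rightarrow> (real \<Rightarrow> real) \<Rightarrow> real measure" where
  "law_cond_mean pc q = distr (density lborel q) lborel (cond_mean pc)"

definition noise_law :: "real \<Rightarrow> real \<Rightarrow> real measure" where
  "noise_law \<sigma>Z T = density lborel (normal_density 0 (\<sigma>Z * sqrt T))"

definition J_well_defined ::
  "(real \<Rightarrow> real \<Rightarrow> real) \<Rightarrow> (real \<Rightarrow> real) \<Rightarrow> bool" where
  "J_well_defined pc q \<longleftrightarrow>
     (AE s in density lborel q.
        integrable lborel (\<lambda>v. v * pc v s) \<and>
        integrable lborel (\<lambda>v. pc v s * ln (pc v s))) \<and>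
     integrable lborel (\<lambda>s. q s * diff_entropy (\<lambda>v. pc v s)) \<and>
     integrable lborel (\<lambda>s. (cond_mean pc s)\<^sup>2 * q s)"

definition J_obj ::
  "real \<Rightarrow> real \<Rightarrow> real \<Rightarrow> real \<Rightarrow> real \<Rightarrow>
   (real \<Rightarrow> real \<Rightarrow> real) \<Rightarrow> (real \<Rightarrow> real) \<Rightarrow> real" where
  "J_obj lam \<sigma>Z T \<mu> \<sigma> pc q =
     1/2 * ((\<integral>s. (cond_mean pc s)\<^sup>2 * q s \<partial>lborel) + \<sigma>Z\<^sup>2 * T
            - enn2real (W2sq (law_cond_mean pc q) (noise_law \<sigma>Z T)))
     - lam * mutual_info \<mu> \<sigma> pc q"

definition admissible ::
  "real \<Rightarrow> real \<Rightarrow> (real \<Rightarrow> real \<Rightarrow> real) \<Rightarrow> (real \<Rightarrow> real) \<Rightarrow> bool" where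
  "admissible \<mu> \<sigma> pc q \<longleftrightarrow>
     signal_structure \<mu> \<sigma> pc q \<and> J_well_defined pc q \<and>
     (AE s in density lborel q.
        cond_mean pc differentiable (at s) \<and> deriv (cond_mean pc) s \<noteq> 0)"

end

theory Submission
  imports Defs
begin

(* Let a = sigma_Z sqrt T and, for an admissible signal structure, M = E[E[v|s]^2].
   Weak Kantorovich duality with quadratic potentials bounds W_2^2(F_s, G) from below, and
   Gibbs' inequality against a normal density, applied conditionally on s, bounds I(s;v) from
   below; both bounds are affine in M and carry a free parameter. Choosing both parameters
   through the root y in (0, sigma_v) of a (sigma_v^2 - y^2) = lam y makes the dependence on M
   cancel, so J <= a y - lam/2 ln(sigma_v^2 / (sigma_v^2 - y^2)) for every admissible structure.
   The normal signal s = v + eps whose conditional mean has standard deviation y attains this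
   value: there E[v|s] ~ N(mu_v, y^2) is coupled comonotonically with Z_T. *)

section \<open>Normal densities and Gibbs' inequality\<close>

lemma has_bochner_integral_normal_quadratic:
  assumes "0 < s"
  shows "has_bochner_integral lborel (\<lambda>x. normal_density m s x * (A * x\<^sup>2 + B * x + C))
           (A * (s\<^sup>2 + m\<^sup>2) + B * m + C)"
proof -
  have f: "(\<lambda>x. normal_density m s x * (A * x\<^sup>2 + B * x + C)) =
      (\<lambda>x. A * (normal_density m s x * (x - m) ^ (2 * 1)) + (2 * A * m + B) * (normal_density m s x * x)
           + (C - A * m\<^sup>2) * normal_density m s x)"
    by (auto simp: fun_eq_iff power2_eq_square algebra_simps)
  have v: "A * (s\<^sup>2 + m\<^sup>2) + B * m + C =
      A * (fact (2 * 1) / ((2 / s\<^sup>2) ^ 1 * fact 1)) + (2 * A * m + B) * m + (C - A * m\<^sup>2) * 1"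
    using assms by (simp add: power2_eq_square algebra_simps)
  show ?thesis
    unfolding f v using assms integrable_normal_density[OF assms] integral_normal_density[OF assms]
    by (intro has_bochner_integral_add has_bochner_integral_mult_right normal_moment_even
        normal_moment_nz_1) (auto simp: has_bochner_integral_iff)
qed

lemma has_bochner_integral_normal_measure_quadratic:
  assumes "0 < s"
  shows "has_bochner_integral (density lborel (normal_density m s)) (\<lambda>x. A * x\<^sup>2 + B * x + C)
           (A * (s\<^sup>2 + m\<^sup>2) + B * m + C)"
  using has_bochner_integral_normal_quadratic[OF assms] by (intro has_bochner_integral_density) simp_all

lemma distr_normal_density_affine:
  assumes "0 < s" "\<alpha> \<noteq> 0"
  shows "distr (density lborel (normal_density m s)) lborel (\<lambda>x. \<beta> + \<alpha> * x) =
           density lborel (normal_density (\<beta> + \<alpha> * m) (\<bar>\<alpha>\<bar> * s))"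
proof -
  interpret prob_space "density lborel (normal_density m s)"
    using prob_space_normal_density[OF assms(1)] .
  have "distributed (density lborel (normal_density m s)) lborel (\<lambda>x. x) (normal_density m s)"
    unfolding distributed_def using distr_id2[of lborel "density lborel (normal_density m s)"] by simp
  from normal_density_affine[OF this assms, of \<beta>] show ?thesis
    unfolding distributed_def by simp
qed

lemma ln_normal_density:
  assumes "0 < s"
  shows "ln (normal_density m s x) = - ln (2 * pi * s\<^sup>2) / 2 - (x - m)\<^sup>2 / (2 * s\<^sup>2)"
  using assms by (simp add: normal_density_def ln_mult ln_div ln_sqrt field_simps)

lemma has_bochner_integral_normal_entropy:
  assumes "0 < s"
  shows "has_bochner_integral lborel (\<lambda>x. normal_density m s x * ln (normal_density m s x))
           (- (ln (2 * pi * s\<^sup>2) + 1) / 2)"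
proof -
  have f: "(\<lambda>x. normal_density m s x * ln (normal_density m s x)) =
      (\<lambda>x. (- ln (2 * pi * s\<^sup>2) / 2) * normal_density m s x
           - (1 / (2 * s\<^sup>2)) * (normal_density m s x * (x - m) ^ (2 * 1)))"
    using assms by (auto simp: fun_eq_iff ln_normal_density field_simps power2_eq_square)
  have v: "- (ln (2 * pi * s\<^sup>2) + 1) / 2 =
      (- ln (2 * pi * s\<^sup>2) / 2) * 1 - (1 / (2 * s\<^sup>2)) * (fact (2 * 1) / ((2 / s\<^sup>2) ^ 1 * fact 1))"
    using assms by (simp add: field_simps)
  show ?thesis
    unfolding f v using assms integrable_normal_density[OF assms] integral_normal_density[OF assms]
    by (intro has_bochner_integral_diff has_bochner_integral_mult_right normal_moment_even)
       (auto simp: has_bochner_integral_iff)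
qed

lemma diff_entropy_normal_density:
  assumes "0 < s"
  shows "diff_entropy (normal_density m s) = (ln (2 * pi * s\<^sup>2) + 1) / 2"
  using has_bochner_integral_integral_eq[OF has_bochner_integral_normal_entropy[OF assms]]
  by (simp add: diff_entropy_def)

lemma mult_ln_le_mult_ln_self:
  fixes f g :: real
  assumes "0 \<le> f" "0 < g"
  shows "f * ln g + f - g \<le> f * ln f"
proof (cases "f = 0")
  case False
  then have "0 < f" using assms by simp
  with assms have "ln g - ln f \<le> g / f - 1"
    using ln_le_minus_one[of "g / f"] by (simp add: ln_div)
  with \<open>0 < f\<close> have "f * (ln g - ln f) \<le> f * (g / f - 1)"
    by (intro mult_left_mono) auto
  with \<open>0 < f\<close> show ?thesis by (simp add: algebra_simps)
qed (use assms in simp)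

lemma entropy_le_normal_bound:
  fixes f :: "real \<Rightarrow> real"
  assumes f_int: "integrable lborel f" and f_nonneg: "\<And>x. 0 \<le> f x"
    and f_one: "(\<integral>x. f x \<partial>lborel) = 1"
    and f_ln: "integrable lborel (\<lambda>x. f x * ln (f x))"
    and f_var: "integrable lborel (\<lambda>x. (x - m)\<^sup>2 * f x)" and "0 < c"
  shows "- (\<integral>x. f x * ln (f x) \<partial>lborel) \<le> ln (2 * pi * c) / 2 + (\<integral>x. (x - m)\<^sup>2 * f x \<partial>lborel) / (2 * c)"
proof -
  let ?g = "normal_density m (sqrt c)"
  have sd: "0 < sqrt c" using \<open>0 < c\<close> by simp
  have f_ln_g: "(\<lambda>x. f x * ln (?g x)) = (\<lambda>x. (- ln (2 * pi * c) / 2) * f x - (1 / (2 * c)) * ((x - m)\<^sup>2 * f x))"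
    using \<open>0 < c\<close> by (simp add: ln_normal_density[OF sd] field_simps fun_eq_iff)
  have int_f_ln_g: "integrable lborel (\<lambda>x. f x * ln (?g x))"
    unfolding f_ln_g using f_int f_var by simp
  have "(\<integral>x. f x * ln (?g x) \<partial>lborel) = (\<integral>x. f x * ln (?g x) + f x - ?g x \<partial>lborel)"
    using int_f_ln_g f_int integrable_normal_density[OF sd] f_one integral_normal_density[OF sd]
    by simp
  also have "\<dots> \<le> (\<integral>x. f x * ln (f x) \<partial>lborel)"
    using int_f_ln_g f_int integrable_normal_density[OF sd] f_ln
    by (intro integral_mono Bochner_Integration.integrable_diff Bochner_Integration.integrable_add
        mult_ln_le_mult_ln_self) (auto simp: f_nonneg normal_density_pos[OF sd])
  finally show ?thesis
    unfolding f_ln_g using f_int f_var f_one by simp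
qed

section \<open>The squared Wasserstein distance\<close>

lemma diff_squared_le:
  fixes a b :: real
  shows "(a - b)\<^sup>2 \<le> 2 * a\<^sup>2 + 2 * b\<^sup>2"
  using sum_squares_bound[of a "- b"] by (simp add: power2_eq_square algebra_simps)

lemma distr_pair_snd:
  assumes "prob_space N" "prob_space M"
  shows "distr (N \<Otimes>\<^sub>M M) M snd = M"
proof (intro measure_eqI)
  interpret N: prob_space N by fact
  interpret M: prob_space M by fact
  fix A assume A: "A \<in> sets (distr (N \<Otimes>\<^sub>M M) M snd)"
  then have "emeasure (distr (N \<Otimes>\<^sub>M M) M snd) A = emeasure (N \<Otimes>\<^sub>M M) (space N \<times> A)"
    by (auto simp: emeasure_distr space_pair_measure dest: sets.sets_into_space
        intro!: arg_cong2[where f=emeasure])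
  with A show "emeasure (distr (N \<Otimes>\<^sub>M M) M snd) A = emeasure M A"
    using M.emeasure_pair_measure_Times[of "space N" N A] N.emeasure_space_1 by simp
qed simp

lemma
  fixes \<pi> :: "(real \<times> real) measure"
  assumes "sets \<pi> = sets (lborel \<Otimes>\<^sub>M lborel)"
  shows measurable_fst_coupling: "fst \<in> measurable \<pi> lborel"
    and measurable_snd_coupling: "snd \<in> measurable \<pi> lborel"
    and borel_measurable_sq_diff_coupling: "(\<lambda>p. (fst p - snd p)\<^sup>2) \<in> borel_measurable \<pi>"
  unfolding measurable_cong_sets[OF assms refl] by simp_all

lemma integrable_coupling_sq_diff:
  fixes \<pi> :: "(real \<times> real) measure"
  assumes sets_\<pi>: "sets \<pi> = sets (lborel \<Otimes>\<^sub>M lborel)"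
    and fst_\<pi>: "distr \<pi> lborel fst = P1" and snd_\<pi>: "distr \<pi> lborel snd = P2"
    and "integrable P1 (\<lambda>x. x\<^sup>2)" "integrable P2 (\<lambda>x. x\<^sup>2)"
  shows "integrable \<pi> (\<lambda>p. (fst p - snd p)\<^sup>2)"
proof (rule Bochner_Integration.integrable_bound)
  have "integrable \<pi> (\<lambda>p. (fst p)\<^sup>2)" "integrable \<pi> (\<lambda>p. (snd p)\<^sup>2)"
    using integrable_distr_eq[OF measurable_fst_coupling[OF sets_\<pi>], of "\<lambda>x. x\<^sup>2"]
      integrable_distr_eq[OF measurable_snd_coupling[OF sets_\<pi>], of "\<lambda>x. x\<^sup>2"] fst_\<pi> snd_\<pi> assms
    by simp_all
  then show "integrable \<pi> (\<lambda>p. 2 * (fst p)\<^sup>2 + 2 * (snd p)\<^sup>2)"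
    by simp
  show "AE p in \<pi>. norm ((fst p - snd p)\<^sup>2) \<le> norm (2 * (fst p)\<^sup>2 + 2 * (snd p)\<^sup>2)"
    using diff_squared_le by (intro AE_I2) simp
qed (rule borel_measurable_sq_diff_coupling[OF sets_\<pi>])

lemma W2sq_le_coupling:
  assumes "prob_space \<pi>" "sets \<pi> = sets (lborel \<Otimes>\<^sub>M lborel)"
    and "distr \<pi> lborel fst = P1" "distr \<pi> lborel snd = P2"
  shows "W2sq P1 P2 \<le> (\<integral>\<^sup>+ p. ennreal ((fst p - snd p)\<^sup>2) \<partial>\<pi>)"
  unfolding W2sq_def using assms by (intro INF_lower) simp

lemma W2sq_finite:
  fixes P1 P2 :: "real measure"
  assumes "prob_space P1" "prob_space P2" and sets_P1: "sets P1 = sets lborel" and sets_P2: "sets P2 = sets lborel"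
    and "integrable P1 (\<lambda>x. x\<^sup>2)" "integrable P2 (\<lambda>x. x\<^sup>2)"
  shows "W2sq P1 P2 < \<top>"
proof -
  let ?\<pi> = "P1 \<Otimes>\<^sub>M P2"
  have sets_\<pi>: "sets ?\<pi> = sets (lborel \<Otimes>\<^sub>M lborel)"
    by (rule sets_pair_measure_cong[OF sets_P1 sets_P2])
  have "distr ?\<pi> lborel fst = distr ?\<pi> P1 fst"
    by (rule distr_cong) (auto simp: sets_P1)
  then have fst_\<pi>: "distr ?\<pi> lborel fst = P1"
    using prob_space.distr_pair_fst[OF \<open>prob_space P2\<close>] by simp
  have "distr ?\<pi> lborel snd = distr ?\<pi> P2 snd"
    by (rule distr_cong) (auto simp: sets_P2)
  then have snd_\<pi>: "distr ?\<pi> lborel snd = P2"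
    using distr_pair_snd[OF assms(1,2)] by simp
  have "W2sq P1 P2 \<le> (\<integral>\<^sup>+ p. ennreal ((fst p - snd p)\<^sup>2) \<partial>?\<pi>)"
    using prob_space_pair[OF assms(1,2)] sets_\<pi> fst_\<pi> snd_\<pi> by (rule W2sq_le_coupling)
  also have "\<dots> = ennreal (\<integral>p. (fst p - snd p)\<^sup>2 \<partial>?\<pi>)"
    using integrable_coupling_sq_diff[OF sets_\<pi> fst_\<pi> snd_\<pi> assms(5,6)]
    by (rule nn_integral_eq_integral) simp
  also have "\<dots> < \<top>"
    by simp
  finally show ?thesis .
qed

lemma W2sq_ge_potentials:
  fixes P1 P2 :: "real measure" and g1 g2 :: "real \<Rightarrow> real"
  assumes [measurable]: "g1 \<in> borel_measurable lborel" "g2 \<in> borel_measurable lborel"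
    and int_g1: "integrable P1 g1" and int_g2: "integrable P2 g2"
    and "integrable P1 (\<lambda>x. x\<^sup>2)" "integrable P2 (\<lambda>x. x\<^sup>2)"
    and potentials: "\<And>x y. g1 x + g2 y \<le> (x - y)\<^sup>2"
  shows "ennreal ((\<integral>x. g1 x \<partial>P1) + (\<integral>y. g2 y \<partial>P2)) \<le> W2sq P1 P2"
  unfolding W2sq_def
proof (rule INF_greatest)
  fix \<pi> :: "(real \<times> real) measure"
  assume "\<pi> \<in> {\<pi>. prob_space \<pi> \<and> sets \<pi> = sets (lborel \<Otimes>\<^sub>M lborel) \<and>
                 distr \<pi> lborel fst = P1 \<and> distr \<pi> lborel snd = P2}"
  then have sets_\<pi>: "sets \<pi> = sets (lborel \<Otimes>\<^sub>M lborel)"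
    and fst_\<pi>: "distr \<pi> lborel fst = P1" and snd_\<pi>: "distr \<pi> lborel snd = P2"
    by auto
  note fst_meas = measurable_fst_coupling[OF sets_\<pi>] and snd_meas = measurable_snd_coupling[OF sets_\<pi>]
  have int1: "integrable \<pi> (\<lambda>p. g1 (fst p))"
    using integrable_distr_eq[OF fst_meas, of g1] fst_\<pi> int_g1 by simp
  have int2: "integrable \<pi> (\<lambda>p. g2 (snd p))"
    using integrable_distr_eq[OF snd_meas, of g2] snd_\<pi> int_g2 by simp
  have int_sq: "integrable \<pi> (\<lambda>p. (fst p - snd p)\<^sup>2)"
    using integrable_coupling_sq_diff[OF sets_\<pi> fst_\<pi> snd_\<pi> assms(5,6)] .
  have "(\<integral>x. g1 x \<partial>P1) + (\<integral>y. g2 y \<partial>P2) = (\<integral>p. g1 (fst p) + g2 (snd p) \<partial>\<pi>)"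
    using int1 int2 integral_distr[OF fst_meas, of g1] integral_distr[OF snd_meas, of g2] fst_\<pi> snd_\<pi>
    by simp
  also have "\<dots> \<le> (\<integral>p. (fst p - snd p)\<^sup>2 \<partial>\<pi>)"
    using int1 int2 int_sq by (intro integral_mono potentials) auto
  finally have "ennreal ((\<integral>x. g1 x \<partial>P1) + (\<integral>y. g2 y \<partial>P2)) \<le> ennreal (\<integral>p. (fst p - snd p)\<^sup>2 \<partial>\<pi>)"
    by (rule ennreal_leI)
  also have "\<dots> = (\<integral>\<^sup>+ p. ennreal ((fst p - snd p)\<^sup>2) \<partial>\<pi>)"
    using int_sq by (rule nn_integral_eq_integral[symmetric]) simp
  finally show "ennreal ((\<integral>x. g1 x \<partial>P1) + (\<integral>y. g2 y \<partial>P2)) \<le> (\<integral>\<^sup>+ p. ennreal ((fst p - snd p)\<^sup>2) \<partial>\<pi>)" .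
qed

lemma enn2real_W2sq_ge_potentials:
  fixes P1 P2 :: "real measure" and g1 g2 :: "real \<Rightarrow> real"
  assumes "prob_space P1" "prob_space P2" "sets P1 = sets lborel" "sets P2 = sets lborel"
    and "g1 \<in> borel_measurable lborel" "g2 \<in> borel_measurable lborel"
    and "integrable P1 g1" "integrable P2 g2"
    and "integrable P1 (\<lambda>x. x\<^sup>2)" "integrable P2 (\<lambda>x. x\<^sup>2)"
    and "\<And>x y. g1 x + g2 y \<le> (x - y)\<^sup>2"
  shows "(\<integral>x. g1 x \<partial>P1) + (\<integral>y. g2 y \<partial>P2) \<le> enn2real (W2sq P1 P2)"
proof (cases "0 \<le> (\<integral>x. g1 x \<partial>P1) + (\<integral>y. g2 y \<partial>P2)")
  case True
  have "enn2real (ennreal ((\<integral>x. g1 x \<partial>P1) + (\<integral>y. g2 y \<partial>P2))) \<le> enn2real (W2sq P1 P2)"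
    using W2sq_ge_potentials[OF assms(5-11)] W2sq_finite[OF assms(1-4,9,10)] by (rule enn2real_mono)
  with True show ?thesis
    by simp
next
  case False
  then show ?thesis
    using enn2real_nonneg[of "W2sq P1 P2"] by linarith
qed

text \<open>The comonotone coupling \<open>(m1 + s1 X, m2 + s2 X)\<close> with \<open>X\<close> standard normal.\<close>

lemma W2sq_normal_le:
  assumes "0 < s1" "0 < s2"
  shows "W2sq (density lborel (normal_density m1 s1)) (density lborel (normal_density m2 s2))
           \<le> ennreal ((m1 - m2)\<^sup>2 + (s1 - s2)\<^sup>2)"
proof -
  let ?N = "density lborel std_normal_density"
  let ?\<pi> = "distr ?N (lborel \<Otimes>\<^sub>M lborel) (\<lambda>x. (m1 + s1 * x, m2 + s2 * x))"
  let ?f = "\<lambda>x. std_normal_density x * ((m1 + s1 * x) - (m2 + s2 * x))\<^sup>2"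
  have "?f = (\<lambda>x. std_normal_density x * ((s1 - s2)\<^sup>2 * x\<^sup>2 + (2 * (m1 - m2) * (s1 - s2)) * x + (m1 - m2)\<^sup>2))"
    by (simp add: fun_eq_iff power2_eq_square algebra_simps)
  then have f: "has_bochner_integral lborel ?f ((m1 - m2)\<^sup>2 + (s1 - s2)\<^sup>2)"
    using has_bochner_integral_normal_quadratic[of 1 0 "(s1 - s2)\<^sup>2" "2 * (m1 - m2) * (s1 - s2)" "(m1 - m2)\<^sup>2"]
    by (simp add: add.commute)
  have std_affine: "distr ?N lborel (\<lambda>x. m + s * x) = density lborel (normal_density m s)"
    if "0 < s" for m s
    using distr_normal_density_affine[of 1 s 0 m] that by simp
  have "distr ?\<pi> lborel fst = distr ?N lborel (\<lambda>x. m1 + s1 * x)"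
    "distr ?\<pi> lborel snd = distr ?N lborel (\<lambda>x. m2 + s2 * x)"
    by (subst distr_distr; simp add: comp_def)+
  then have "W2sq (density lborel (normal_density m1 s1)) (density lborel (normal_density m2 s2))
      \<le> (\<integral>\<^sup>+ p. ennreal ((fst p - snd p)\<^sup>2) \<partial>?\<pi>)"
    using std_affine assms by (intro W2sq_le_coupling prob_space.prob_space_distr prob_space_normal_density) auto
  also have "\<dots> = (\<integral>\<^sup>+ x. ?f x \<partial>lborel)"
    by (simp add: nn_integral_distr nn_integral_density flip: ennreal_mult')
  also have "\<dots> = ennreal ((m1 - m2)\<^sup>2 + (s1 - s2)\<^sup>2)"
    using integrable.intros[OF f] has_bochner_integral_integral_eq[OF f]
    by (subst nn_integral_eq_integral) auto
  finally show ?thesis .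
qed

text \<open>The potentials are \<open>(x - y)\<^sup>2\<close> minus the square \<open>(t (x - \<mu>) - y)\<^sup>2 / t\<close>; the bound is
  sharp for \<open>t = a / sd P\<close>.\<close>

lemma W2sq_normal_ge:
  fixes P :: "real measure"
  assumes P: "prob_space P" "sets P = sets lborel"
    and int1: "integrable P (\<lambda>x. x)" and int2: "integrable P (\<lambda>x. x\<^sup>2)"
    and "0 < a" "0 < t"
  defines "\<mu> \<equiv> \<integral>x. x \<partial>P" and "M \<equiv> \<integral>x. x\<^sup>2 \<partial>P"
  shows "M + a\<^sup>2 - t * (M - \<mu>\<^sup>2) - a\<^sup>2 / t \<le> enn2real (W2sq P (density lborel (normal_density 0 a)))"
proof -
  interpret prob_space P by (fact P)
  let ?g1 = "\<lambda>x. (1 - t) * x\<^sup>2 + (2 * t * \<mu>) * x + (- t * \<mu>\<^sup>2)"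
  let ?g2 = "\<lambda>y. (1 - 1 / t) * y\<^sup>2 + (- 2 * \<mu>) * y + 0"
  have "integrable P ?g1" "(\<integral>x. ?g1 x \<partial>P) = (1 - t) * M + (2 * t * \<mu>) * \<mu> - t * \<mu>\<^sup>2"
    using int1 int2 unfolding \<mu>_def M_def by (simp_all add: prob_space)
  then have g1: "has_bochner_integral P ?g1 (M - t * (M - \<mu>\<^sup>2))"
    by (simp add: has_bochner_integral_iff algebra_simps power2_eq_square)
  have g2: "has_bochner_integral (density lborel (normal_density 0 a)) ?g2 (a\<^sup>2 - a\<^sup>2 / t)"
    using has_bochner_integral_normal_measure_quadratic[OF \<open>0 < a\<close>, of 0 "1 - 1 / t" "- 2 * \<mu>" 0]
    by (simp add: algebra_simps)
  have sq2: "has_bochner_integral (density lborel (normal_density 0 a)) (\<lambda>y. y\<^sup>2) (a\<^sup>2)"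
    using has_bochner_integral_normal_measure_quadratic[OF \<open>0 < a\<close>, of 0 1 0 0] by simp
  have "?g1 x + ?g2 y \<le> (x - y)\<^sup>2" for x y
  proof -
    have "(x - y)\<^sup>2 - (?g1 x + ?g2 y) = (t * (x - \<mu>) - y)\<^sup>2 / t"
      using \<open>0 < t\<close> by (simp add: field_simps power2_eq_square)
    with \<open>0 < t\<close> show ?thesis
      by (smt (verit) divide_nonneg_pos zero_le_power2)
  qed
  then have "(\<integral>x. ?g1 x \<partial>P) + (\<integral>y. ?g2 y \<partial>density lborel (normal_density 0 a))
      \<le> enn2real (W2sq P (density lborel (normal_density 0 a)))"
    using P int2 integrable.intros[OF sq2] integrable.intros[OF g1]
      integrable.intros[OF g2] prob_space_normal_density[OF \<open>0 < a\<close>]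
    by (intro enn2real_W2sq_ge_potentials) auto
  then show ?thesis
    using has_bochner_integral_integral_eq[OF g1] has_bochner_integral_integral_eq[OF g2] by simp
qed

section \<open>An upper bound on the objective\<close>

lemma abs_mult_le_sum_squares:
  fixes a b :: real
  shows "\<bar>a * b\<bar> \<le> a\<^sup>2 + b\<^sup>2"
proof -
  have "2 * (\<bar>a\<bar> * \<bar>b\<bar>) \<le> a\<^sup>2 + b\<^sup>2"
    using sum_squares_bound[of "\<bar>a\<bar>" "\<bar>b\<bar>"] by (simp add: power2_abs mult.assoc)
  moreover have "0 \<le> \<bar>a\<bar> * \<bar>b\<bar>"
    by simp
  ultimately show ?thesis
    unfolding abs_mult by linarith
qed

locale square_integrable_signal =
  fixes \<mu> \<sigma> :: real and pc :: "real \<Rightarrow> real \<Rightarrow> real" and q :: "real \<Rightarrow> real"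
  assumes signal_structure: "signal_structure \<mu> \<sigma> pc q"
    and \<sigma>_pos: "0 < \<sigma>"
    and integrable_cond_mean_sq: "integrable lborel (\<lambda>s. (cond_mean pc s)\<^sup>2 * q s)"
begin

lemma
  shows measurable_pc[measurable]: "(\<lambda>(v, s). pc v s) \<in> borel_measurable (lborel \<Otimes>\<^sub>M lborel)"
    and measurable_q[measurable]: "q \<in> borel_measurable lborel"
    and q_nonneg: "0 \<le> q s"
    and pc_nonneg: "0 \<le> pc v s"
    and integrable_q: "integrable lborel q"
    and integral_q: "(\<integral>s. q s \<partial>lborel) = 1"
    and integrable_pc: "integrable lborel (\<lambda>v. pc v s)"
    and integral_pc: "(\<integral>v. pc v s \<partial>lborel) = 1"
    and integrable_pc_q: "integrable lborel (\<lambda>s. pc v s * q s)"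
    and integral_pc_q: "(\<integral>s. pc v s * q s \<partial>lborel) = normal_density \<mu> \<sigma> v"
  using signal_structure unfolding signal_structure_def by auto

lemma measurable_pc_swap[measurable]: "(\<lambda>(s, v). pc v s) \<in> borel_measurable (lborel \<Otimes>\<^sub>M lborel)"
  using measurable_pair_swap[OF measurable_pc] by simp

lemma measurable_cond_mean[measurable]: "cond_mean pc \<in> borel_measurable lborel"
proof -
  have "(\<lambda>(s, v). v * pc v s) \<in> borel_measurable (lborel \<Otimes>\<^sub>M lborel)"
    by measurable
  then show ?thesis
    unfolding cond_mean_def by (rule lborel.borel_measurable_lebesgue_integral)
qed

lemma has_bochner_integral_joint_payoff:
  assumes [measurable]: "h \<in> borel_measurable lborel"
    and int_h: "integrable lborel (\<lambda>v. normal_density \<mu> \<sigma> v * \<bar>h v\<bar>)"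
  shows "has_bochner_integral (lborel \<Otimes>\<^sub>M lborel) (\<lambda>(v, s). pc v s * q s * h v)
           (\<integral>v. normal_density \<mu> \<sigma> v * h v \<partial>lborel)"
proof -
  have "(\<integral>s. \<bar>pc v s * q s * h v\<bar> \<partial>lborel) = normal_density \<mu> \<sigma> v * \<bar>h v\<bar>" for v
    using integral_pc_q[of v] by (simp add: abs_mult pc_nonneg q_nonneg)
  then have int: "integrable (lborel \<Otimes>\<^sub>M lborel) (\<lambda>(v, s). pc v s * q s * h v)"
    using int_h integrable_pc_q by (intro lborel_pair.Fubini_integrable) auto
  then show ?thesis
    using lborel_pair.integral_fst[OF int] by (simp add: has_bochner_integral_iff integral_pc_q)
qed

lemma has_bochner_integral_joint_signal:
  assumes [measurable]: "g \<in> borel_measurable lborel"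
    and int_g: "integrable lborel (\<lambda>s. q s * \<bar>g s\<bar>)"
  shows "has_bochner_integral (lborel \<Otimes>\<^sub>M lborel) (\<lambda>(v, s). pc v s * q s * g s)
           (\<integral>s. q s * g s \<partial>lborel)"
proof -
  have "(\<integral>v. \<bar>pc v s * q s * g s\<bar> \<partial>lborel) = q s * \<bar>g s\<bar>" for s
    using integral_pc[of s] by (simp add: abs_mult pc_nonneg q_nonneg)
  then have "integrable (lborel \<Otimes>\<^sub>M lborel) (\<lambda>(s, v). pc v s * q s * g s)"
    using int_g integrable_pc by (intro lborel_pair.Fubini_integrable) auto
  then have int: "integrable (lborel \<Otimes>\<^sub>M lborel) (\<lambda>(v, s). pc v s * q s * g s)"
    using lborel_pair.integrable_product_swap_iff[of "\<lambda>(v, s). pc v s * q s * g s"] by simp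
  then show ?thesis
    using lborel_pair.integral_snd[OF int] by (simp add: has_bochner_integral_iff integral_pc)
qed

definition cond_mean_sq :: real where
  "cond_mean_sq = (\<integral>s. q s * (cond_mean pc s)\<^sup>2 \<partial>lborel)"

lemma integral_pc_q_mult_payoff: "(\<integral>v. pc v s * q s * (v * c) \<partial>lborel) = q s * cond_mean pc s * c"
proof -
  have "(\<integral>v. pc v s * q s * (v * c) \<partial>lborel) = (\<integral>v. (q s * c) * (v * pc v s) \<partial>lborel)"
    by (intro Bochner_Integration.integral_cong) auto
  then show ?thesis
    by (simp add: cond_mean_def)
qed

lemma has_bochner_integral_joint_payoff_sq:
  "has_bochner_integral (lborel \<Otimes>\<^sub>M lborel) (\<lambda>(v, s). pc v s * q s * v\<^sup>2) (\<sigma>\<^sup>2 + \<mu>\<^sup>2)"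
  using has_bochner_integral_joint_payoff[of "\<lambda>v. v\<^sup>2"]
    has_bochner_integral_normal_quadratic[OF \<sigma>_pos, of \<mu> 1 0 0]
  by (simp add: has_bochner_integral_iff)

lemma has_bochner_integral_joint_payoff_mean:
  "has_bochner_integral (lborel \<Otimes>\<^sub>M lborel) (\<lambda>(v, s). pc v s * q s * v) \<mu>"
  using has_bochner_integral_joint_payoff[of "\<lambda>v. v"] integral_normal_moment_nz_1[OF \<sigma>_pos, of \<mu>]
    integrable_abs[OF integrable_normal_moment_nz_1[OF \<sigma>_pos, of \<mu>]]
  by (simp add: abs_mult)

lemma has_bochner_integral_joint_cond_mean_sq:
  "has_bochner_integral (lborel \<Otimes>\<^sub>M lborel) (\<lambda>(v, s). pc v s * q s * (cond_mean pc s)\<^sup>2) cond_mean_sq"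
  using has_bochner_integral_joint_signal[of "\<lambda>s. (cond_mean pc s)\<^sup>2"] integrable_cond_mean_sq
  unfolding cond_mean_sq_def by (simp add: ac_simps)

lemma has_bochner_integral_joint_payoff_cond_mean:
  "has_bochner_integral (lborel \<Otimes>\<^sub>M lborel) (\<lambda>(v, s). pc v s * q s * (v * cond_mean pc s)) cond_mean_sq"
proof -
  have "integrable (lborel \<Otimes>\<^sub>M lborel) (\<lambda>(v, s). pc v s * q s * (v * cond_mean pc s))"
  proof (rule Bochner_Integration.integrable_bound)
    show "integrable (lborel \<Otimes>\<^sub>M lborel) (\<lambda>(v, s). pc v s * q s * v\<^sup>2 + pc v s * q s * (cond_mean pc s)\<^sup>2)"
      using has_bochner_integral_joint_payoff_sq has_bochner_integral_joint_cond_mean_sq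
      by (auto dest!: integrable.intros simp: split_beta')
    show "AE x in lborel \<Otimes>\<^sub>M lborel. norm ((\<lambda>(v, s). pc v s * q s * (v * cond_mean pc s)) x)
        \<le> norm ((\<lambda>(v, s). pc v s * q s * v\<^sup>2 + pc v s * q s * (cond_mean pc s)\<^sup>2) x)"
      using abs_mult_le_sum_squares
      by (intro AE_I2)
         (auto simp: abs_mult pc_nonneg q_nonneg distrib_left[symmetric] intro!: mult_left_mono)
  qed simp
  then show ?thesis
    using lborel_pair.integral_snd[of "\<lambda>v s. pc v s * q s * (v * cond_mean pc s)"]
    unfolding has_bochner_integral_iff integral_pc_q_mult_payoff cond_mean_sq_def
    by (simp add: power2_eq_square ac_simps)
qed

lemma has_bochner_integral_joint_residual_sq:
  "has_bochner_integral (lborel \<Otimes>\<^sub>M lborel) (\<lambda>(v, s). pc v s * q s * (v - cond_mean pc s)\<^sup>2)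
     (\<sigma>\<^sup>2 + \<mu>\<^sup>2 - cond_mean_sq)"
proof -
  have f: "(\<lambda>(v, s). pc v s * q s * (v - cond_mean pc s)\<^sup>2) =
      (\<lambda>x. (\<lambda>(v, s). pc v s * q s * v\<^sup>2) x - 2 * (\<lambda>(v, s). pc v s * q s * (v * cond_mean pc s)) x
           + (\<lambda>(v, s). pc v s * q s * (cond_mean pc s)\<^sup>2) x)"
    by (auto simp: fun_eq_iff power2_eq_square algebra_simps)
  have v: "\<sigma>\<^sup>2 + \<mu>\<^sup>2 - cond_mean_sq = (\<sigma>\<^sup>2 + \<mu>\<^sup>2) - 2 * cond_mean_sq + cond_mean_sq"
    by simp
  show ?thesis
    unfolding f v
    by (intro has_bochner_integral_add has_bochner_integral_diff has_bochner_integral_mult_right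
        has_bochner_integral_joint_payoff_sq has_bochner_integral_joint_payoff_cond_mean
        has_bochner_integral_joint_cond_mean_sq)
qed

lemma
  shows integrable_q_cond_mean: "integrable lborel (\<lambda>s. q s * cond_mean pc s)"
    and integral_q_cond_mean: "(\<integral>s. q s * cond_mean pc s \<partial>lborel) = \<mu>"
  using lborel_pair.integrable_snd[of "\<lambda>v s. pc v s * q s * v"]
    lborel_pair.integral_snd[of "\<lambda>v s. pc v s * q s * v"]
    has_bochner_integral_joint_payoff_mean integral_pc_q_mult_payoff[of _ 1]
  by (auto simp: has_bochner_integral_iff)

definition cond_var :: "real \<Rightarrow> real" where
  "cond_var s = (\<integral>v. (v - cond_mean pc s)\<^sup>2 * pc v s \<partial>lborel)"

lemma
  shows has_bochner_integral_q_cond_var: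
      "has_bochner_integral lborel (\<lambda>s. q s * cond_var s) (\<sigma>\<^sup>2 + \<mu>\<^sup>2 - cond_mean_sq)"
    and AE_integrable_residual_sq:
      "AE s in lborel. 0 < q s \<longrightarrow> integrable lborel (\<lambda>v. (v - cond_mean pc s)\<^sup>2 * pc v s)"
proof -
  have joint: "integrable (lborel \<Otimes>\<^sub>M lborel) (\<lambda>(v, s). pc v s * q s * (v - cond_mean pc s)\<^sup>2)"
    "integral\<^sup>L (lborel \<Otimes>\<^sub>M lborel) (\<lambda>(v, s). pc v s * q s * (v - cond_mean pc s)\<^sup>2) = \<sigma>\<^sup>2 + \<mu>\<^sup>2 - cond_mean_sq"
    using has_bochner_integral_joint_residual_sq by (simp_all add: has_bochner_integral_iff)
  have inner: "(\<integral>v. pc v s * q s * (v - cond_mean pc s)\<^sup>2 \<partial>lborel) = q s * cond_var s" for s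
    unfolding cond_var_def by (simp add: ac_simps)
  show "has_bochner_integral lborel (\<lambda>s. q s * cond_var s) (\<sigma>\<^sup>2 + \<mu>\<^sup>2 - cond_mean_sq)"
    using lborel_pair.integrable_snd[of "\<lambda>v s. pc v s * q s * (v - cond_mean pc s)\<^sup>2"]
      lborel_pair.integral_snd[of "\<lambda>v s. pc v s * q s * (v - cond_mean pc s)\<^sup>2"] joint
    by (simp add: has_bochner_integral_iff inner)
  show "AE s in lborel. 0 < q s \<longrightarrow> integrable lborel (\<lambda>v. (v - cond_mean pc s)\<^sup>2 * pc v s)"
    using lborel_pair.AE_integrable_snd[of "\<lambda>v s. pc v s * q s * (v - cond_mean pc s)\<^sup>2", OF joint(1)]
  proof (eventually_elim, intro impI)
    fix s assume int: "integrable lborel (\<lambda>v. pc v s * q s * (v - cond_mean pc s)\<^sup>2)" and "0 < q s"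
    from int have "integrable lborel (\<lambda>v. (1 / q s) * (pc v s * q s * (v - cond_mean pc s)\<^sup>2))"
      by (rule integrable_mult_right)
    moreover have "(1 / q s) * (pc v s * q s * (v - cond_mean pc s)\<^sup>2) = (v - cond_mean pc s)\<^sup>2 * pc v s" for v
      using \<open>0 < q s\<close> by simp
    ultimately show "integrable lborel (\<lambda>v. (v - cond_mean pc s)\<^sup>2 * pc v s)"
      by simp
  qed
qed

text \<open>Conditionally on the signal, Gibbs' inequality bounds the entropy of the payoff by its
  conditional variance.\<close>

lemma mutual_info_ge:
  assumes J_well_defined: "J_well_defined pc q" and "0 < c"
  shows "(ln (2 * pi * \<sigma>\<^sup>2) + 1) / 2 - ln (2 * pi * c) / 2 - (\<sigma>\<^sup>2 + \<mu>\<^sup>2 - cond_mean_sq) / (2 * c)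
           \<le> mutual_info \<mu> \<sigma> pc q"
proof -
  have AE_ln: "AE s in lborel. 0 < q s \<longrightarrow> integrable lborel (\<lambda>v. pc v s * ln (pc v s))"
    using J_well_defined unfolding J_well_defined_def by (auto simp: AE_density elim: AE_mp)
  have int_entropy: "integrable lborel (\<lambda>s. q s * diff_entropy (\<lambda>v. pc v s))"
    using J_well_defined unfolding J_well_defined_def by blast
  have bound: "has_bochner_integral lborel (\<lambda>s. ln (2 * pi * c) / 2 * q s + (1 / (2 * c)) * (q s * cond_var s))
      (ln (2 * pi * c) / 2 * 1 + (1 / (2 * c)) * (\<sigma>\<^sup>2 + \<mu>\<^sup>2 - cond_mean_sq))"
    using integrable_q integral_q
    by (intro has_bochner_integral_add has_bochner_integral_mult_right has_bochner_integral_q_cond_var)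
       (simp add: has_bochner_integral_iff)
  have "(\<integral>s. q s * diff_entropy (\<lambda>v. pc v s) \<partial>lborel)
      \<le> (\<integral>s. ln (2 * pi * c) / 2 * q s + (1 / (2 * c)) * (q s * cond_var s) \<partial>lborel)"
    using int_entropy integrable.intros[OF bound]
  proof (rule integral_mono_AE)
    show "AE s in lborel. q s * diff_entropy (\<lambda>v. pc v s) \<le> ln (2 * pi * c) / 2 * q s + 1 / (2 * c) * (q s * cond_var s)"
      using AE_ln AE_integrable_residual_sq
    proof eventually_elim
      case (elim s)
      show ?case
      proof (cases "0 < q s")
        case True
        have "diff_entropy (\<lambda>v. pc v s) \<le> ln (2 * pi * c) / 2 + cond_var s / (2 * c)"
          unfolding diff_entropy_def cond_var_def
          using elim True \<open>0 < c\<close>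
          by (intro entropy_le_normal_bound integrable_pc pc_nonneg integral_pc) auto
        then have "q s * diff_entropy (\<lambda>v. pc v s) \<le> q s * (ln (2 * pi * c) / 2 + cond_var s / (2 * c))"
          using True by (intro mult_left_mono) auto
        then show ?thesis
          by (simp add: algebra_simps)
      qed (use q_nonneg[of s] in simp)
    qed
  qed
  also have "\<dots> = ln (2 * pi * c) / 2 + (\<sigma>\<^sup>2 + \<mu>\<^sup>2 - cond_mean_sq) / (2 * c)"
    using has_bochner_integral_integral_eq[OF bound] by simp
  finally show ?thesis
    unfolding mutual_info_def diff_entropy_normal_density[OF \<sigma>_pos] by simp
qed

lemma prob_space_law_cond_mean: "prob_space (law_cond_mean pc q)"
proof -
  have "prob_space (density lborel q)"
  proof
    have "emeasure (density lborel q) (space (density lborel q)) = ennreal (\<integral>s. q s \<partial>lborel)"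
      using integrable_q by (simp add: emeasure_density nn_integral_eq_integral q_nonneg)
    then show "emeasure (density lborel q) (space (density lborel q)) = 1"
      using integral_q by simp
  qed
  then show ?thesis
    unfolding law_cond_mean_def by (rule prob_space.prob_space_distr) simp
qed

lemma
  fixes g :: "real \<Rightarrow> real"
  assumes [measurable]: "g \<in> borel_measurable lborel"
  shows integrable_law_cond_mean_iff:
      "integrable (law_cond_mean pc q) g \<longleftrightarrow> integrable lborel (\<lambda>s. q s * g (cond_mean pc s))"
    and integral_law_cond_mean:
      "(\<integral>x. g x \<partial>law_cond_mean pc q) = (\<integral>s. q s * g (cond_mean pc s) \<partial>lborel)"
  unfolding law_cond_mean_def
  by (subst integrable_distr_eq integral_distr, simp_all,
      subst integrable_density integral_density, simp_all add: q_nonneg)+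

text \<open>Weak duality against the noise law, with the slope \<open>t = a / y\<close>, and Gibbs' inequality,
  with the variance \<open>c = \<sigma>\<^sup>2 - y\<^sup>2\<close>, give upper bounds on \<open>J\<close> which are affine in
  \<open>cond_mean_sq\<close>; the first order condition on \<open>y\<close> makes the slopes cancel.\<close>

lemma J_obj_le:
  assumes "J_well_defined pc q" and "0 < \<sigma>Z" "0 < T" "0 \<le> lam" and "0 < y" "y < \<sigma>"
    and first_order: "\<sigma>Z * sqrt T * (\<sigma>\<^sup>2 - y\<^sup>2) = lam * y"
  shows "J_obj lam \<sigma>Z T \<mu> \<sigma> pc q \<le>
           \<sigma>Z * sqrt T * y - lam * (ln (2 * pi * \<sigma>\<^sup>2) - ln (2 * pi * (\<sigma>\<^sup>2 - y\<^sup>2))) / 2"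
proof -
  define a where "a = \<sigma>Z * sqrt T"
  define c where "c = \<sigma>\<^sup>2 - y\<^sup>2"
  define M where "M = cond_mean_sq"
  have "0 < a" "0 < c"
    using assms by (simp_all add: a_def c_def power_strict_mono)
  have a_sq: "a\<^sup>2 = \<sigma>Z\<^sup>2 * T"
    using \<open>0 < T\<close> by (simp add: a_def power_mult_distrib)
  have lam: "lam = a * c / y"
    using first_order \<open>0 < y\<close> by (simp add: a_def c_def field_simps)
  have law_moments: "integrable (law_cond_mean pc q) (\<lambda>x. x)" "integrable (law_cond_mean pc q) (\<lambda>x. x\<^sup>2)"
    "(\<integral>x. x \<partial>law_cond_mean pc q) = \<mu>" "(\<integral>x. x\<^sup>2 \<partial>law_cond_mean pc q) = M"
    using integrable_q_cond_mean integral_q_cond_mean integrable_cond_mean_sq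
    by (simp_all add: integrable_law_cond_mean_iff integral_law_cond_mean M_def cond_mean_sq_def ac_simps)
  have "M + a\<^sup>2 - (a / y) * (M - \<mu>\<^sup>2) - a\<^sup>2 / (a / y) \<le> enn2real (W2sq (law_cond_mean pc q) (noise_law \<sigma>Z T))"
    using W2sq_normal_ge[OF prob_space_law_cond_mean _ law_moments(1,2) \<open>0 < a\<close>, of "a / y"]
      law_moments(3,4) \<open>0 < a\<close> \<open>0 < y\<close>
    by (simp add: noise_law_def a_def law_cond_mean_def)
  moreover have "lam * ((ln (2 * pi * \<sigma>\<^sup>2) + 1) / 2 - ln (2 * pi * c) / 2 - (\<sigma>\<^sup>2 + \<mu>\<^sup>2 - M) / (2 * c))
      \<le> lam * mutual_info \<mu> \<sigma> pc q"
    using mutual_info_ge[OF assms(1) \<open>0 < c\<close>] \<open>0 \<le> lam\<close> by (simp add: M_def mult_left_mono)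
  moreover have "(\<integral>s. (cond_mean pc s)\<^sup>2 * q s \<partial>lborel) = M"
    by (simp add: M_def cond_mean_sq_def ac_simps)
  ultimately have "J_obj lam \<sigma>Z T \<mu> \<sigma> pc q \<le> 1/2 * ((a / y) * (M - \<mu>\<^sup>2) + a\<^sup>2 / (a / y))
      - lam * ((ln (2 * pi * \<sigma>\<^sup>2) + 1) / 2 - ln (2 * pi * c) / 2 - (\<sigma>\<^sup>2 + \<mu>\<^sup>2 - M) / (2 * c))"
    unfolding J_obj_def a_sq[symmetric] by argo
  also have "\<dots> = a * y - lam * (ln (2 * pi * \<sigma>\<^sup>2) - ln (2 * pi * c)) / 2"
    unfolding lam c_def using \<open>0 < a\<close> \<open>0 < y\<close> \<open>0 < c\<close>
    by (simp add: c_def field_simps power2_eq_square)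
  finally show ?thesis
    unfolding a_def c_def .
qed

end

section \<open>The normal signal\<close>

text \<open>The normal signal \<open>s = v + \<epsilon>\<close> whose conditional mean \<open>E[v|s]\<close> has standard deviation
  \<open>y\<close>: the signal has standard deviation \<open>\<sigma>\<^sup>2 / y\<close>, the regression slope of \<open>v\<close> on \<open>s\<close> is
  \<open>y\<^sup>2 / \<sigma>\<^sup>2\<close> and the residual variance is \<open>\<sigma>\<^sup>2 - y\<^sup>2\<close>.\<close>

locale gaussian_signal =
  fixes \<mu> \<sigma> y :: real
  assumes y_pos: "0 < y" and y_less: "y < \<sigma>"
begin

definition noise_sd :: real where "noise_sd = \<sigma> * sqrt (\<sigma>\<^sup>2 - y\<^sup>2) / y"
definition signal_sd :: real where "signal_sd = \<sigma>\<^sup>2 / y"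
definition slope :: real where "slope = y\<^sup>2 / \<sigma>\<^sup>2"

definition gauss_pc :: "real \<Rightarrow> real \<Rightarrow> real" where
  "gauss_pc v s = normal_density (\<mu> + slope * (s - \<mu>)) (sqrt (\<sigma>\<^sup>2 - y\<^sup>2)) v"

definition gauss_q :: "real \<Rightarrow> real" where
  "gauss_q = normal_density \<mu> signal_sd"

lemma \<sigma>_pos: "0 < \<sigma>"
  using y_pos y_less by simp

lemma residual_var_pos: "0 < \<sigma>\<^sup>2 - y\<^sup>2"
  using y_pos y_less by (simp add: power_strict_mono)

lemma residual_sd_pos: "0 < sqrt (\<sigma>\<^sup>2 - y\<^sup>2)"
  using residual_var_pos by simp

lemma noise_sd_pos: "0 < noise_sd"
  unfolding noise_sd_def using \<sigma>_pos y_pos residual_var_pos by simp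

lemma signal_sd_pos: "0 < signal_sd"
  unfolding signal_sd_def using \<sigma>_pos y_pos by simp

lemma slope_pos: "0 < slope"
  unfolding slope_def using \<sigma>_pos y_pos by simp

lemma slope_signal_sd: "slope * signal_sd = y"
  unfolding slope_def signal_sd_def using y_pos \<sigma>_pos by (simp add: power2_eq_square field_simps)

lemma gauss_joint_density:
  "gauss_pc v s * gauss_q s = normal_density \<mu> \<sigma> v * normal_density 0 noise_sd (s - v)"
proof -
  have noise_sq: "noise_sd\<^sup>2 = \<sigma>\<^sup>2 * (\<sigma>\<^sup>2 - y\<^sup>2) / y\<^sup>2"
    unfolding noise_sd_def using residual_var_pos by (simp add: power_mult_distrib power_divide)
  have signal_sq: "signal_sd\<^sup>2 = \<sigma>\<^sup>2 * \<sigma>\<^sup>2 / y\<^sup>2"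
    unfolding signal_sd_def by (simp add: power_divide power2_eq_square)
  have "(2 * pi * (\<sigma>\<^sup>2 - y\<^sup>2)) * (2 * pi * signal_sd\<^sup>2) = (2 * pi * \<sigma>\<^sup>2) * (2 * pi * noise_sd\<^sup>2)"
    unfolding noise_sq signal_sq using y_pos by (simp add: field_simps power2_eq_square)
  then have norm_const: "sqrt (2 * pi * (sqrt (\<sigma>\<^sup>2 - y\<^sup>2))\<^sup>2) * sqrt (2 * pi * signal_sd\<^sup>2)
      = sqrt (2 * pi * \<sigma>\<^sup>2) * sqrt (2 * pi * noise_sd\<^sup>2)"
    using residual_var_pos by (simp add: real_sqrt_mult[symmetric])
  have exponent: "(v - (\<mu> + slope * (s - \<mu>)))\<^sup>2 / (2 * (sqrt (\<sigma>\<^sup>2 - y\<^sup>2))\<^sup>2) + (s - \<mu>)\<^sup>2 / (2 * signal_sd\<^sup>2)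
      = (v - \<mu>)\<^sup>2 / (2 * \<sigma>\<^sup>2) + (s - v - 0)\<^sup>2 / (2 * noise_sd\<^sup>2)"
    unfolding noise_sq signal_sq slope_def using \<sigma>_pos y_pos residual_var_pos
    by (simp add: field_simps power2_eq_square)
  have "gauss_pc v s * gauss_q s = 1 / (sqrt (2 * pi * (sqrt (\<sigma>\<^sup>2 - y\<^sup>2))\<^sup>2) * sqrt (2 * pi * signal_sd\<^sup>2)) *
      exp (- ((v - (\<mu> + slope * (s - \<mu>)))\<^sup>2 / (2 * (sqrt (\<sigma>\<^sup>2 - y\<^sup>2))\<^sup>2) + (s - \<mu>)\<^sup>2 / (2 * signal_sd\<^sup>2)))"
    unfolding gauss_pc_def gauss_q_def normal_density_def by (simp add: exp_add[symmetric] exp_diff)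
  also have "\<dots> = 1 / (sqrt (2 * pi * \<sigma>\<^sup>2) * sqrt (2 * pi * noise_sd\<^sup>2)) *
      exp (- ((v - \<mu>)\<^sup>2 / (2 * \<sigma>\<^sup>2) + (s - v - 0)\<^sup>2 / (2 * noise_sd\<^sup>2)))"
    unfolding norm_const exponent ..
  also have "\<dots> = normal_density \<mu> \<sigma> v * normal_density 0 noise_sd (s - v)"
    unfolding normal_density_def by (simp add: exp_add[symmetric] exp_diff)
  finally show ?thesis .
qed

lemma cond_mean_gauss: "cond_mean gauss_pc = (\<lambda>s. \<mu> + slope * (s - \<mu>))"
  using integral_normal_moment_nz_1[OF residual_sd_pos]
  by (simp add: fun_eq_iff cond_mean_def gauss_pc_def mult.commute)

lemma signal_structure_gauss: "signal_structure \<mu> \<sigma> gauss_pc gauss_q"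
  unfolding signal_structure_def
proof (intro conjI allI)
  fix v
  have "(\<lambda>s. gauss_pc v s * gauss_q s) = (\<lambda>s. normal_density \<mu> \<sigma> v * normal_density v noise_sd s)"
    unfolding gauss_joint_density by (auto simp: normal_density_def fun_eq_iff power2_commute)
  then show "integrable lborel (\<lambda>s. gauss_pc v s * gauss_q s)"
    and "(\<integral>s. gauss_pc v s * gauss_q s \<partial>lborel) = normal_density \<mu> \<sigma> v"
    using integrable_normal_density[OF noise_sd_pos] integral_normal_density[OF noise_sd_pos] by simp_all
next
  show "(\<lambda>(v, s). gauss_pc v s) \<in> borel_measurable (lborel \<Otimes>\<^sub>M lborel)"
    unfolding gauss_pc_def normal_density_def by measurable
qed (use integrable_normal_density[OF signal_sd_pos] integral_normal_density[OF signal_sd_pos]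
      integrable_normal_density[OF residual_sd_pos] integral_normal_density[OF residual_sd_pos]
      in \<open>simp_all add: gauss_q_def gauss_pc_def\<close>)

lemma has_bochner_integral_cond_mean_gauss_sq:
  "has_bochner_integral lborel (\<lambda>s. (cond_mean gauss_pc s)\<^sup>2 * gauss_q s) (\<mu>\<^sup>2 + y\<^sup>2)"
proof -
  have "(\<lambda>s. (cond_mean gauss_pc s)\<^sup>2 * gauss_q s) = (\<lambda>s. normal_density \<mu> signal_sd s *
      (slope\<^sup>2 * s\<^sup>2 + (2 * slope * (1 - slope) * \<mu>) * s + (1 - slope)\<^sup>2 * \<mu>\<^sup>2))"
    unfolding cond_mean_gauss gauss_q_def by (auto simp: fun_eq_iff power2_eq_square algebra_simps)
  moreover have "(slope * signal_sd)\<^sup>2 = y\<^sup>2"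
    by (simp add: slope_signal_sd)
  ultimately show ?thesis
    using has_bochner_integral_normal_quadratic[OF signal_sd_pos, of \<mu> "slope\<^sup>2" "2 * slope * (1 - slope) * \<mu>"
        "(1 - slope)\<^sup>2 * \<mu>\<^sup>2"]
    by (simp add: power2_eq_square algebra_simps)
qed

lemma diff_entropy_gauss_pc: "diff_entropy (\<lambda>v. gauss_pc v s) = (ln (2 * pi * (\<sigma>\<^sup>2 - y\<^sup>2)) + 1) / 2"
  unfolding gauss_pc_def using diff_entropy_normal_density[OF residual_sd_pos] residual_var_pos by simp

lemma admissible_gauss: "admissible \<mu> \<sigma> gauss_pc gauss_q"
  unfolding admissible_def J_well_defined_def
proof (intro conjI signal_structure_gauss AE_I2)
  fix s
  show "integrable lborel (\<lambda>v. v * gauss_pc v s)"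
    unfolding gauss_pc_def using integrable_normal_moment_nz_1[OF residual_sd_pos] by (simp add: mult.commute)
  show "integrable lborel (\<lambda>v. gauss_pc v s * ln (gauss_pc v s))"
    unfolding gauss_pc_def using integrable.intros[OF has_bochner_integral_normal_entropy[OF residual_sd_pos]] .
  have "((\<lambda>s. \<mu> + slope * (s - \<mu>)) has_real_derivative slope) (at s)"
    by (auto intro!: derivative_eq_intros)
  then show "cond_mean gauss_pc differentiable at s" "deriv (cond_mean gauss_pc) s \<noteq> 0"
    unfolding cond_mean_gauss using DERIV_imp_deriv[of _ slope s] slope_pos real_differentiable_def
    by auto
next
  show "integrable lborel (\<lambda>s. gauss_q s * diff_entropy (\<lambda>v. gauss_pc v s))"
    unfolding diff_entropy_gauss_pc gauss_q_def using integrable_normal_density[OF signal_sd_pos] by simp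
  show "integrable lborel (\<lambda>s. (cond_mean gauss_pc s)\<^sup>2 * gauss_q s)"
    using has_bochner_integral_cond_mean_gauss_sq by (rule integrable.intros)
qed

lemma law_cond_mean_gauss: "law_cond_mean gauss_pc gauss_q = density lborel (normal_density \<mu> y)"
proof -
  have "cond_mean gauss_pc = (\<lambda>s. (\<mu> - slope * \<mu>) + slope * s)"
    unfolding cond_mean_gauss by (auto simp: algebra_simps)
  then show ?thesis
    unfolding law_cond_mean_def gauss_q_def
    using distr_normal_density_affine[OF signal_sd_pos, of slope] slope_pos slope_signal_sd by simp
qed

lemma mutual_info_gauss:
  "mutual_info \<mu> \<sigma> gauss_pc gauss_q = (ln (2 * pi * \<sigma>\<^sup>2) - ln (2 * pi * (\<sigma>\<^sup>2 - y\<^sup>2))) / 2"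
proof -
  have "(\<integral>s. gauss_q s * diff_entropy (\<lambda>v. gauss_pc v s) \<partial>lborel) = (ln (2 * pi * (\<sigma>\<^sup>2 - y\<^sup>2)) + 1) / 2"
    unfolding diff_entropy_gauss_pc gauss_q_def using integral_normal_density[OF signal_sd_pos] by simp
  then show ?thesis
    unfolding mutual_info_def diff_entropy_normal_density[OF \<sigma>_pos] by (simp add: field_simps)
qed

lemma J_obj_gauss_ge:
  assumes "0 < \<sigma>Z" "0 < T"
  shows "\<sigma>Z * sqrt T * y - lam * (ln (2 * pi * \<sigma>\<^sup>2) - ln (2 * pi * (\<sigma>\<^sup>2 - y\<^sup>2))) / 2
           \<le> J_obj lam \<sigma>Z T \<mu> \<sigma> gauss_pc gauss_q"
proof -
  define a where "a = \<sigma>Z * sqrt T"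
  have "0 < a"
    using assms by (simp add: a_def)
  have "enn2real (W2sq (law_cond_mean gauss_pc gauss_q) (noise_law \<sigma>Z T)) \<le> \<mu>\<^sup>2 + (y - a)\<^sup>2"
    using W2sq_normal_le[OF y_pos \<open>0 < a\<close>, of \<mu> 0]
    unfolding law_cond_mean_gauss noise_law_def a_def by (intro enn2real_leI) simp_all
  moreover have "\<sigma>Z\<^sup>2 * T = a\<^sup>2"
    using assms by (simp add: a_def power_mult_distrib)
  ultimately show ?thesis
    unfolding J_obj_def mutual_info_gauss has_bochner_integral_integral_eq[OF has_bochner_integral_cond_mean_gauss_sq]
    by (simp add: a_def[symmetric] power2_eq_square algebra_simps)
qed

end

lemma first_order_root:
  fixes a lam \<sigma> :: real
  assumes "0 < a" "0 < lam" "0 < \<sigma>"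
  obtains y where "0 < y" "y < \<sigma>" "a * (\<sigma>\<^sup>2 - y\<^sup>2) = lam * y"
proof -
  let ?f = "\<lambda>y. a * (\<sigma>\<^sup>2 - y\<^sup>2) - lam * y"
  have "\<exists>y. 0 \<le> y \<and> y \<le> \<sigma> \<and> ?f y = 0"
    using assms by (intro IVT2) (auto intro!: continuous_intros)
  then obtain y where "0 \<le> y" "y \<le> \<sigma>" "?f y = 0"
    by blast
  moreover have "y \<noteq> 0" "y \<noteq> \<sigma>"
    using \<open>?f y = 0\<close> assms by auto
  ultimately show ?thesis
    by (intro that) auto
qed

theorem proposition4:
  fixes \<mu>v \<sigma>v lam \<sigma>Z T :: real
  assumes "\<sigma>v > 0" and "lam > 0" and "\<sigma>Z > 0" and "T > 0"
  shows "\<exists>\<sigma>\<epsilon> > 0. \<exists>pc q.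
           admissible \<mu>v \<sigma>v pc q \<and>
           (\<forall>v s. pc v s * q s = normal_density \<mu>v \<sigma>v v * normal_density 0 \<sigma>\<epsilon> (s - v)) \<and>
           (\<forall>pc' q'. admissible \<mu>v \<sigma>v pc' q' \<longrightarrow>
              J_obj lam \<sigma>Z T \<mu>v \<sigma>v pc' q' \<le> J_obj lam \<sigma>Z T \<mu>v \<sigma>v pc q)"
proof -
  obtain y where "0 < y" "y < \<sigma>v" and first_order: "\<sigma>Z * sqrt T * (\<sigma>v\<^sup>2 - y\<^sup>2) = lam * y"
    using first_order_root[of "\<sigma>Z * sqrt T" lam \<sigma>v] assms by auto
  interpret gaussian_signal \<mu>v \<sigma>v y
    using \<open>0 < y\<close> \<open>y < \<sigma>v\<close> by unfold_locales
  have "J_obj lam \<sigma>Z T \<mu>v \<sigma>v pc' q' \<le> J_obj lam \<sigma>Z T \<mu>v \<sigma>v gauss_pc gauss_q"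
    if "admissible \<mu>v \<sigma>v pc' q'" for pc' q'
  proof -
    interpret square_integrable_signal \<mu>v \<sigma>v pc' q'
      using that \<open>\<sigma>v > 0\<close> by unfold_locales (auto simp: admissible_def J_well_defined_def)
    show ?thesis
      using J_obj_le[OF _ _ _ _ \<open>0 < y\<close> \<open>y < \<sigma>v\<close> first_order] J_obj_gauss_ge[of \<sigma>Z T lam] that assms
      by (force simp: admissible_def)
  qed
  then show ?thesis
    using noise_sd_pos admissible_gauss gauss_joint_density by blast
qed

end
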